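(* Let $N\ge2$, $h=1/N$, and index vectors $Z\in\mathbb{R}^{(N+1)^2}$ by grid points $(x_i,y_j)=(ih,jh)$, $0\le i,j\le N$, writing $z_{i,j}$ for the components; let $Z_I\in\mathbb{R}^{(N-1)^2}$ denote the components at interior points $1\le i,j\le N-1$. Let $\mathcal{L}_h:\mathbb{R}^{(N+1)^2}\to\mathbb{R}^{(N-1)^2}$ be the five-point operator $$(\mathcal{L}_hZ)_{i,j}=-\frac{z_{i-1,j}+z_{i+1,j}-4z_{i,j}+z_{i,j-1}+z_{i,j+1}}{h^2},\quad 1\le i,j\le N-1.$$ Let $\beta>0$ and $\Phi,\Psi\in\mathbb{R}^{(N+1)^2}$ satisfy $$\mathcal{L}_h\Psi=-\beta\Phi_I,\qquad \mathcal{L}_h\Phi=\Psi_I .$$ Then $\mathcal{L}_h(\Psi^2+\beta\Phi^2)\le 0$ componentwise, where $\Psi^2,\Phi^2$ denote componentwise squares. *)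

theory Defs
  imports Complex_Main
begin

text \<open>Grid vectors in R^((N+1)^2) are represented as functions z :: nat => nat => real,
  with z i j the component at grid point (i h, j h), 0 <= i, j <= N; values outside
  this range are irrelevant.\<close>

definition five_point :: "nat \<Rightarrow> (nat \<Rightarrow> nat \<Rightarrow> real) \<Rightarrow> nat \<Rightarrow> nat \<Rightarrow> real" where
  "five_point N z i j =
     - (z (i-1) j + z (i+1) j - 4 * z i j + z i (j-1) + z i (j+1)) / (1 / real N)^2"

definition interior :: "nat \<Rightarrow> nat \<Rightarrow> nat \<Rightarrow> bool" where
  "interior N i j \<longleftrightarrow> 1 \<le> i \<and> i \<le> N - 1 \<and> 1 \<le> j \<and> j \<le> N - 1"

end

theory Submission
  imports Defs
begin

text \<open>The five-point operator satisfies a discrete product rule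
  \<open>L\<^sub>h(z\<^sup>2) = 2 z L\<^sub>h z - (sum of squared differences to the neighbours) / h\<^sup>2 \<le> 2 z L\<^sub>h z\<close>.
  Applying it to \<open>\<Psi>\<close> and \<open>\<Phi>\<close> and using linearity,
  \<open>L\<^sub>h(\<Psi>\<^sup>2 + \<beta>\<Phi>\<^sup>2) \<le> 2\<Psi> L\<^sub>h\<Psi> + 2\<beta>\<Phi> L\<^sub>h\<Phi> = -2\<beta>\<Psi>\<Phi> + 2\<beta>\<Phi>\<Psi> = 0\<close>.
  Since \<open>h\<^sup>2 \<ge> 0\<close> always (also for the junk value \<open>N = 0\<close>), the hypothesis \<open>N \<ge> 2\<close> is not needed.\<close>

lemma five_point_add:
  "five_point N (\<lambda>a b. z a b + w a b) i j = five_point N z i j + five_point N w i j"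
  unfolding five_point_def by (simp add: field_simps)

lemma five_point_cmult:
  "five_point N (\<lambda>a b. c * z a b) i j = c * five_point N z i j"
  unfolding five_point_def by (simp add: field_simps)

lemma five_point_square:
  "five_point N (\<lambda>a b. (z a b)\<^sup>2) i j =
     2 * z i j * five_point N z i j
     - ((z (i-1) j - z i j)\<^sup>2 + (z (i+1) j - z i j)\<^sup>2
        + (z i (j-1) - z i j)\<^sup>2 + (z i (j+1) - z i j)\<^sup>2) / (1 / real N)\<^sup>2"
  unfolding five_point_def by (simp add: diff_divide_distrib power2_eq_square algebra_simps)

lemma five_point_square_le:
  "five_point N (\<lambda>a b. (z a b)\<^sup>2) i j \<le> 2 * z i j * five_point N z i j"
  unfolding five_point_square by simp

theorem lemma4p1:
  fixes N :: nat and \<beta> :: real and \<Phi> \<Psi> :: "nat \<Rightarrow> nat \<Rightarrow> real"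
  assumes "N \<ge> 2" and "\<beta> > 0"
    and "\<And>i j. interior N i j \<Longrightarrow> five_point N \<Psi> i j = - \<beta> * \<Phi> i j"
    and "\<And>i j. interior N i j \<Longrightarrow> five_point N \<Phi> i j = \<Psi> i j"
  shows "\<And>i j. interior N i j \<Longrightarrow>
           five_point N (\<lambda>a b. (\<Psi> a b)^2 + \<beta> * (\<Phi> a b)^2) i j \<le> 0"
proof -
  fix i j
  assume ij: "interior N i j"
  have "five_point N (\<lambda>a b. (\<Psi> a b)^2 + \<beta> * (\<Phi> a b)^2) i j
      = five_point N (\<lambda>a b. (\<Psi> a b)^2) i j + \<beta> * five_point N (\<lambda>a b. (\<Phi> a b)^2) i j"
    by (simp add: five_point_add five_point_cmult)
  also have "\<dots> \<le> 2 * \<Psi> i j * five_point N \<Psi> i j + \<beta> * (2 * \<Phi> i j * five_point N \<Phi> i j)"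
    using \<open>\<beta> > 0\<close> by (intro add_mono mult_left_mono five_point_square_le) simp_all
  also have "\<dots> = 0"
    using assms(3,4)[OF ij] by simp
  finally show "five_point N (\<lambda>a b. (\<Psi> a b)^2 + \<beta> * (\<Phi> a b)^2) i j \<le> 0" .
qed

end
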